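(* Let $f:\mathbb{R}^d\to\mathbb{R}$ and $P:\mathbb{R}^d\to\mathbb{R}^s$ be continuously differentiable, $D\subseteq\mathbb{R}^s$ closed, $\Omega=\{z\mid P(z)\in D\}$. Assume that $\bar z\in\Omega$ is a sharp minimum for the problem $\min f(z)$ s.t. $P(z)\in D$, that GGCQ holds at $\bar z$, and that the mapping $u\rightrightarrows\nabla P(\bar z)u-T_D(P(\bar z))$ is metrically subregular at $(0,0)$. Then there exist $w\in T_D(P(\bar z))$ and a multiplier $w^\ast\in\widehat N_{T_D(P(\bar z))}(w)$ such that $\nabla f(\bar z)+\nabla P(\bar z)^\ast w^\ast=0$.
   Context: Tangent cone $T_\Omega(\bar z)=\{w\mid \exists t_k\downarrow0,\ w_k\to w,\ \bar z+t_kw_k\in\Omega\}$; polar cone $K^\ast=\{z^\ast\mid\langle z^\ast,w\rangle\le0\ \forall w\in K\}$; regular normal cone $\widehat N_\Omega(\bar z)=(T_\Omega(\bar z))^\ast$. Linearized tangent cone $T^{\rm lin}_{P,D}(\bar z)=\{u\mid\nabla P(\bar z)u\in T_D(P(\bar z))\}$. GGCQ holds at $\bar z$ if $\widehat N_\Omega(\bar z)=(T^{\rm lin}_{P,D}(\bar z))^\ast$. A point $\bar z\in\Omega$ is a sharp minimum if there is $\alpha>0$ with $f(z)\ge f(\bar z)+\alpha\|z-\bar z\|$ for all $z\in\Omega$ near $\bar z$. A mapping $M$ is metrically subregular at $(\bar z,\bar w)\in\operatorname{gph}M$ if there are a neighborhood $W$ of $\bar z$ and $\kappa>0$ with $\operatorname{dist}(z,M^{-1}(\bar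 w))\le\kappa\operatorname{dist}(\bar w,M(z))$ for $z\in W$. *)

theory Defs
  imports "HOL-Analysis.Analysis"
begin

definition tangent_cone :: "'a::real_normed_vector set \<Rightarrow> 'a \<Rightarrow> 'a set" where
  "tangent_cone \<Omega> zb = {w. \<exists>(t::nat \<Rightarrow> real) (wk::nat \<Rightarrow> 'a).
      (\<forall>k. t k > 0) \<and> t \<longlonglongrightarrow> 0 \<and> wk \<longlonglongrightarrow> w \<and> (\<forall>k. zb + t k *\<^sub>R wk k \<in> \<Omega>)}"

definition polar_cone :: "'a::real_inner set \<Rightarrow> 'a set" where
  "polar_cone K = {zs. \<forall>w\<in>K. inner zs w \<le> 0}"

definition regular_normal_cone :: "'a::real_inner set \<Rightarrow> 'a \<Rightarrow> 'a set" where
  "regular_normal_cone \<Omega> zb = polar_cone (tangent_cone \<Omega> zb)"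

definition lin_tangent_cone :: "real^'d^'s \<Rightarrow> (real^'s) set \<Rightarrow> real^'s \<Rightarrow> (real^'d) set" where
  "lin_tangent_cone JPzb D Pzb = {u. JPzb *v u \<in> tangent_cone D Pzb}"

definition GGCQ :: "(real^'d) set \<Rightarrow> real^'d^'s \<Rightarrow> (real^'s) set \<Rightarrow> real^'d \<Rightarrow> real^'s \<Rightarrow> bool" where
  "GGCQ \<Omega> JPzb D zb Pzb \<longleftrightarrow> regular_normal_cone \<Omega> zb = polar_cone (lin_tangent_cone JPzb D Pzb)"

definition sharp_minimum :: "('a::real_normed_vector \<Rightarrow> real) \<Rightarrow> 'a set \<Rightarrow> 'a \<Rightarrow> bool" where
  "sharp_minimum f \<Omega> zb \<longleftrightarrow> zb \<in> \<Omega> \<and>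
     (\<exists>\<alpha>>0. \<exists>\<epsilon>>0. \<forall>z\<in>\<Omega> \<inter> ball zb \<epsilon>. f z \<ge> f zb + \<alpha> * norm (z - zb))"

text \<open>Distance to the empty set is +\<infinity> by convention, so the inequality is only
  required when M z is nonempty (infdist to {} is 0 in Isabelle).\<close>
definition metrically_subregular ::
  "('a::metric_space \<Rightarrow> 'b::metric_space set) \<Rightarrow> 'a \<Rightarrow> 'b \<Rightarrow> bool" where
  "metrically_subregular M zb wb \<longleftrightarrow> wb \<in> M zb \<and>
     (\<exists>W \<kappa>. open W \<and> zb \<in> W \<and> \<kappa> > 0 \<and>
        (\<forall>z\<in>W. M z \<noteq> {} \<longrightarrow> infdist z {x. wb \<in> M x} \<le> \<kappa> * infdist wb (M z)))"

end

theory Submission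
  imports Defs
begin

(* Differentiating along tangent sequences turns the sharp minimum into the growth condition
   alpha |u| <= <grad f, u> on the tangent cone of Omega, and GGCQ, read through polars, passes
   this growth to the linearized cone L = {u. J u in T}, where J is the Jacobian of P and T the
   tangent cone of D. Metric subregularity bounds dist(u, L) by dist(J u, T) near 0, so for
   large c the penalty <grad f, u> + c/2 dist(J u, T)^2 is positive on a small sphere while it
   vanishes at 0: it has an interior local minimizer u0. If v is a point of T nearest to J u0,
   then u0 also minimizes the smooth function <grad f, u> + c/2 |J u - v|^2 locally, and
   Fermat's rule gives grad f + J^T (c (J u0 - v)) = 0, where c (J u0 - v) is a proximal, hence
   regular, normal to T at v. *)

lemma zero_in_tangent_cone:
  assumes "x \<in> S"
  shows "0 \<in> tangent_cone S x"
  unfolding tangent_cone_def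
  using assms LIMSEQ_inverse_real_of_nat
  by (intro CollectI exI[of _ "\<lambda>k. inverse (real (Suc k))"] exI[of _ "\<lambda>k. 0"]) auto

lemma tangent_cone_approachable:
  "w \<in> tangent_cone S x \<longleftrightarrow>
     (\<forall>e>0. \<exists>t w'. 0 < t \<and> t < e \<and> dist w' w < e \<and> x + t *\<^sub>R w' \<in> S)"
proof
  assume "w \<in> tangent_cone S x"
  then obtain t wk where t: "\<forall>k. t k > 0" "t \<longlonglongrightarrow> 0" "wk \<longlonglongrightarrow> w" "\<forall>k. x + t k *\<^sub>R wk k \<in> S"
    unfolding tangent_cone_def by blast
  show "\<forall>e>0. \<exists>t w'. 0 < t \<and> t < e \<and> dist w' w < e \<and> x + t *\<^sub>R w' \<in> S"
  proof (intro allI impI)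
    fix e :: real assume "e > 0"
    then have "eventually (\<lambda>k. dist (t k) 0 < e \<and> dist (wk k) w < e) sequentially"
      using tendstoD[OF t(2)] tendstoD[OF t(3)] by (simp add: eventually_conj)
    then obtain k where "dist (t k) 0 < e" "dist (wk k) w < e"
      by (auto dest: eventually_happens'[OF sequentially_bot])
    then show "\<exists>t w'. 0 < t \<and> t < e \<and> dist w' w < e \<and> x + t *\<^sub>R w' \<in> S"
      using t(1,4) by (intro exI[of _ "t k"] exI[of _ "wk k"]) auto
  qed
next
  assume approx: "\<forall>e>0. \<exists>t w'. 0 < t \<and> t < e \<and> dist w' w < e \<and> x + t *\<^sub>R w' \<in> S"
  define e :: "nat \<Rightarrow> real" where "e n = inverse (real (Suc n))" for n
  have "\<forall>n. \<exists>t w'. 0 < t \<and> t < e n \<and> dist w' w < e n \<and> x + t *\<^sub>R w' \<in> S"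
    using approx by (simp add: e_def)
  then obtain t wk where tw: "\<And>n. 0 < t n" "\<And>n. t n < e n" "\<And>n. dist (wk n) w < e n"
      "\<And>n. x + t n *\<^sub>R wk n \<in> S"
    by metis
  have e0: "e \<longlonglongrightarrow> 0"
    unfolding e_def by (rule LIMSEQ_inverse_real_of_nat)
  have "t \<longlonglongrightarrow> 0"
  proof (rule tendsto_sandwich[OF _ _ tendsto_const e0])
    show "eventually (\<lambda>n. 0 \<le> t n) sequentially" "eventually (\<lambda>n. t n \<le> e n) sequentially"
      using tw(1,2) by (simp_all add: less_imp_le)
  qed
  moreover have "wk \<longlonglongrightarrow> w"
  proof (rule tendsto_dist_iff[THEN iffD2], rule tendsto_sandwich[OF _ _ tendsto_const e0])
    show "eventually (\<lambda>n. 0 \<le> dist (wk n) w) sequentially"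
      "eventually (\<lambda>n. dist (wk n) w \<le> e n) sequentially"
      using tw(3) by (simp_all add: less_imp_le)
  qed
  ultimately show "w \<in> tangent_cone S x"
    unfolding tangent_cone_def using tw(1,4) by blast
qed

lemma closed_tangent_cone: "closed (tangent_cone S x)"
proof -
  have "w \<in> tangent_cone S x"
    if near: "\<forall>e>0. \<exists>w1\<in>tangent_cone S x. dist w1 w < e" for w
    unfolding tangent_cone_approachable
  proof (intro allI impI)
    fix e :: real assume "e > 0"
    then obtain w1 where w1: "w1 \<in> tangent_cone S x" "dist w1 w < e / 2"
      using near half_gt_zero by blast
    then obtain t w' where "0 < t" "t < e / 2" "dist w' w1 < e / 2" "x + t *\<^sub>R w' \<in> S"
      using \<open>e > 0\<close> unfolding tangent_cone_approachable by (meson half_gt_zero)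
    moreover have "dist w' w < e"
      using dist_triangle_half_r[of w1 w' "e" w] w1(2) \<open>dist w' w1 < e / 2\<close>
      by (simp add: dist_commute)
    ultimately show "\<exists>t w'. 0 < t \<and> t < e \<and> dist w' w < e \<and> x + t *\<^sub>R w' \<in> S"
      by (intro exI[of _ t] exI[of _ w']) simp
  qed
  then have "closure (tangent_cone S x) \<subseteq> tangent_cone S x"
    by (auto simp: closure_approachable)
  then show ?thesis
    by (simp add: closure_subset_eq)
qed

lemma polar_cone_scaleR_nonneg:
  "0 \<le> c \<Longrightarrow> y \<in> polar_cone K \<Longrightarrow> c *\<^sub>R y \<in> polar_cone K"
  by (auto simp: polar_cone_def mult_nonneg_nonpos)

lemma nearest_point_in_polar_tangent_cone:
  fixes y :: "'a::real_inner"
  assumes "v0 \<in> T" and nearest: "\<And>v. v \<in> T \<Longrightarrow> dist y v0 \<le> dist y v"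
  shows "y - v0 \<in> polar_cone (tangent_cone T v0)"
  unfolding polar_cone_def
proof (intro CollectI ballI)
  fix h assume "h \<in> tangent_cone T v0"
  then obtain t hk where t: "\<forall>k. t k > 0" "t \<longlonglongrightarrow> 0" "hk \<longlonglongrightarrow> h"
      "\<forall>k. v0 + t k *\<^sub>R hk k \<in> T"
    unfolding tangent_cone_def by blast
  have "0 \<le> - 2 * ((y - v0) \<bullet> hk k) + t k * (hk k \<bullet> hk k)" for k
  proof -
    have "dist y v0 \<le> dist y (v0 + t k *\<^sub>R hk k)"
      using nearest t(4) by blast
    then have "(y - v0) \<bullet> (y - v0) \<le> ((y - v0) - t k *\<^sub>R hk k) \<bullet> ((y - v0) - t k *\<^sub>R hk k)"
      by (simp add: dist_norm norm_le diff_diff_add)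
    then have "0 \<le> t k * (- 2 * ((y - v0) \<bullet> hk k) + t k * (hk k \<bullet> hk k))"
      by (simp add: inner_diff_left inner_diff_right algebra_simps inner_commute)
    then show ?thesis
      using t(1)[rule_format, of k] by (simp add: zero_le_mult_iff)
  qed
  moreover have "(\<lambda>k. - 2 * ((y - v0) \<bullet> hk k) + t k * (hk k \<bullet> hk k))
      \<longlonglongrightarrow> - 2 * ((y - v0) \<bullet> h) + 0 * (h \<bullet> h)"
    by (intro tendsto_intros t)
  ultimately have "0 \<le> - 2 * ((y - v0) \<bullet> h) + 0 * (h \<bullet> h)"
    by (intro LIMSEQ_le_const) auto
  then show "(y - v0) \<bullet> h \<le> 0"
    by simp
qed

lemma difference_quotient_along_tangent_sequence:
  fixes g :: "'a::real_inner"
  assumes deriv: "(f has_derivative (\<lambda>u. g \<bullet> u)) (at x)"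
    and t: "\<And>k. t k > 0" "t \<longlonglongrightarrow> 0" and "uk \<longlonglongrightarrow> u"
  shows "(\<lambda>k. (f (x + t k *\<^sub>R uk k) - f x) / t k) \<longlonglongrightarrow> g \<bullet> u"
proof -
  define R where "R y = norm (f y - f x - g \<bullet> (y - x)) / norm (y - x)" for y
  have "(R \<longlongrightarrow> 0) (at x)"
    using deriv by (simp add: has_derivative_iff_norm R_def[abs_def])
  moreover have "R x = 0"
    by (simp add: R_def)
  ultimately have "isCont R x"
    by (simp add: isCont_def)
  moreover have "(\<lambda>k. x + t k *\<^sub>R uk k) \<longlonglongrightarrow> x"
    using tendsto_add[OF tendsto_const tendsto_scaleR[OF t(2) \<open>uk \<longlonglongrightarrow> u\<close>], of x] by simp
  ultimately have "(\<lambda>k. R (x + t k *\<^sub>R uk k)) \<longlonglongrightarrow> 0"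
    using \<open>R x = 0\<close> isCont_tendsto_compose[of x R] by fastforce
  from tendsto_mult[OF this tendsto_norm[OF \<open>uk \<longlonglongrightarrow> u\<close>]]
  have "(\<lambda>k. R (x + t k *\<^sub>R uk k) * norm (uk k)) \<longlonglongrightarrow> 0"
    by simp
  moreover have "R (x + t k *\<^sub>R uk k) * norm (uk k) = \<bar>(f (x + t k *\<^sub>R uk k) - f x) / t k - g \<bullet> uk k\<bar>" for k
  proof (cases "uk k = 0")
    case False
    let ?z = "x + t k *\<^sub>R uk k"
    define r where "r = f ?z - f x - g \<bullet> (?z - x)"
    have "norm (?z - x) = t k * norm (uk k)"
      using t(1)[of k] by simp
    then have "R ?z * norm (uk k) = \<bar>r\<bar> / (t k * norm (uk k)) * norm (uk k)"
      using t(1)[of k] unfolding R_def r_def by simp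
    also have "\<dots> = \<bar>r / t k\<bar>"
      using t(1)[of k] False by simp
    also have "r / t k = (f ?z - f x) / t k - g \<bullet> uk k"
      using t(1)[of k] by (simp add: r_def diff_divide_distrib)
    finally show ?thesis .
  qed (simp add: R_def)
  ultimately have "(\<lambda>k. \<bar>(f (x + t k *\<^sub>R uk k) - f x) / t k - g \<bullet> uk k\<bar>) \<longlonglongrightarrow> 0"
    by simp
  then have "(\<lambda>k. (f (x + t k *\<^sub>R uk k) - f x) / t k - g \<bullet> uk k) \<longlonglongrightarrow> 0"
    by (rule tendsto_rabs_zero_cancel)
  from tendsto_add[OF this tendsto_inner[OF tendsto_const \<open>uk \<longlonglongrightarrow> u\<close>, of g]]
  show ?thesis
    by simp
qed

lemma sharp_minimum_tangent_growth:
  fixes g :: "'a::real_inner"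
  assumes deriv: "(f has_derivative (\<lambda>u. g \<bullet> u)) (at zb)" and sharp: "sharp_minimum f \<Omega> zb"
  obtains \<alpha> where "\<alpha> > 0" "\<And>u. u \<in> tangent_cone \<Omega> zb \<Longrightarrow> \<alpha> * norm u \<le> g \<bullet> u"
proof -
  obtain \<alpha> \<epsilon> where "\<alpha> > 0" "\<epsilon> > 0"
    and sharp_ineq: "\<And>z. z \<in> \<Omega> \<inter> ball zb \<epsilon> \<Longrightarrow> f zb + \<alpha> * norm (z - zb) \<le> f z"
    using sharp unfolding sharp_minimum_def by blast
  have "\<alpha> * norm u \<le> g \<bullet> u" if "u \<in> tangent_cone \<Omega> zb" for u
  proof -
    obtain t uk where t: "\<And>k. t k > 0" "t \<longlonglongrightarrow> 0" and "uk \<longlonglongrightarrow> u"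
      and in_\<Omega>: "\<And>k. zb + t k *\<^sub>R uk k \<in> \<Omega>"
      using \<open>u \<in> tangent_cone \<Omega> zb\<close> unfolding tangent_cone_def by blast
    have "(\<lambda>k. zb + t k *\<^sub>R uk k) \<longlonglongrightarrow> zb"
      using tendsto_add[OF tendsto_const tendsto_scaleR[OF t(2) \<open>uk \<longlonglongrightarrow> u\<close>], of zb] by simp
    then have "\<forall>\<^sub>F k in sequentially. zb + t k *\<^sub>R uk k \<in> ball zb \<epsilon>"
      using \<open>\<epsilon> > 0\<close> by (intro topological_tendstoD) auto
    then have "\<forall>\<^sub>F k in sequentially. \<alpha> * norm (uk k) \<le> (f (zb + t k *\<^sub>R uk k) - f zb) / t k"
    proof (rule eventually_mono)
      fix k assume "zb + t k *\<^sub>R uk k \<in> ball zb \<epsilon>"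
      then have "f zb + t k * (\<alpha> * norm (uk k)) \<le> f (zb + t k *\<^sub>R uk k)"
        using sharp_ineq[of "zb + t k *\<^sub>R uk k"] in_\<Omega> t(1)[of k] by (simp add: mult.left_commute)
      then show "\<alpha> * norm (uk k) \<le> (f (zb + t k *\<^sub>R uk k) - f zb) / t k"
        using t(1)[of k] by (simp add: pos_le_divide_eq mult.commute)
    qed
    moreover have "(\<lambda>k. \<alpha> * norm (uk k)) \<longlonglongrightarrow> \<alpha> * norm u"
      using \<open>uk \<longlonglongrightarrow> u\<close> by (intro tendsto_intros)
    ultimately show ?thesis
      using difference_quotient_along_tangent_sequence[OF deriv t \<open>uk \<longlonglongrightarrow> u\<close>]
        tendsto_le[OF sequentially_bot] by blast
  qed
  then show ?thesis
    using that \<open>\<alpha> > 0\<close> by blast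
qed

(* The growth condition on K says exactly that b - g lies in the polar of K whenever
   norm b <= alpha, so it passes to every L whose polar contains that of K. *)
lemma linear_growth_polar_cone_mono:
  fixes g :: "'a::real_inner"
  assumes polar: "polar_cone K \<subseteq> polar_cone L" and "\<alpha> \<ge> 0"
    and growth: "\<And>u. u \<in> K \<Longrightarrow> \<alpha> * norm u \<le> g \<bullet> u" and "u \<in> L"
  shows "\<alpha> * norm u \<le> g \<bullet> u"
proof (cases "u = 0")
  case False
  define b where "b = (\<alpha> / norm u) *\<^sub>R u"
  have "norm b = \<alpha>"
    using False \<open>\<alpha> \<ge> 0\<close> by (simp add: b_def)
  have "b - g \<in> polar_cone K"
    unfolding polar_cone_def
  proof (intro CollectI ballI)
    fix w assume "w \<in> K"
    have "b \<bullet> w \<le> norm b * norm w"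
      by (rule norm_cauchy_schwarz)
    then show "(b - g) \<bullet> w \<le> 0"
      using growth[OF \<open>w \<in> K\<close>] \<open>norm b = \<alpha>\<close> by (simp add: inner_diff_left)
  qed
  then have "(b - g) \<bullet> u \<le> 0"
    using polar \<open>u \<in> L\<close> unfolding polar_cone_def by blast
  moreover have "b \<bullet> u = \<alpha> * norm u"
    using False by (simp add: b_def power2_norm_eq_inner[symmetric] power2_eq_square)
  ultimately show ?thesis
    by (simp add: inner_diff_left)
qed simp

lemma infdist_zero_diff_image:
  fixes a :: "'a::real_normed_vector"
  shows "infdist 0 {a - v | v. v \<in> T} = infdist a T"
proof -
  have "{a - v | v. v \<in> T} = (\<lambda>v. a - v) ` T"
    by blast
  moreover have "dist 0 (a - v) = dist a v" for v
    by (simp add: dist_norm norm_minus_commute)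
  ultimately show ?thesis
    by (simp add: infdist_def image_comp o_def)
qed

lemma metrically_subregular_at_zero_infdist_bound:
  fixes A :: "'a::real_normed_vector \<Rightarrow> 'b::real_normed_vector"
  assumes subreg: "metrically_subregular (\<lambda>u. {A u - v | v. v \<in> T}) 0 0" and "T \<noteq> {}"
  obtains \<rho> \<kappa> where "\<rho> > 0"
    "\<And>u. norm u \<le> \<rho> \<Longrightarrow> infdist u {u. A u \<in> T} \<le> \<kappa> * infdist (A u) T"
proof -
  obtain W \<kappa> where "open W" "0 \<in> W" and bound: "\<And>u. u \<in> W \<Longrightarrow> {A u - v | v. v \<in> T} \<noteq> {} \<Longrightarrow>
      infdist u {x. 0 \<in> {A x - v | v. v \<in> T}} \<le> \<kappa> * infdist 0 {A u - v | v. v \<in> T}"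
    using subreg unfolding metrically_subregular_def by blast
  obtain r where "r > 0" "ball 0 r \<subseteq> W"
    using \<open>open W\<close> \<open>0 \<in> W\<close> openE by blast
  have "{x. 0 \<in> {A x - v | v. v \<in> T}} = {u. A u \<in> T}"
    by auto
  moreover have "u \<in> W" if "norm u \<le> r / 2" for u
    using that \<open>r > 0\<close> \<open>ball 0 r \<subseteq> W\<close> by auto
  ultimately have "infdist u {u. A u \<in> T} \<le> \<kappa> * infdist (A u) T" if "norm u \<le> r / 2" for u
    using bound[of u] that \<open>T \<noteq> {}\<close> by (simp add: infdist_zero_diff_image)
  then show ?thesis
    using that[of "r / 2" \<kappa>] \<open>r > 0\<close> by simp
qed

lemma linear_growth_infdist:
  fixes g :: "'a::euclidean_space"
  assumes "closed L" "L \<noteq> {}" "\<alpha> \<ge> 0"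
    and growth: "\<And>u. u \<in> L \<Longrightarrow> \<alpha> * norm u \<le> g \<bullet> u"
  shows "\<alpha> * norm u - (\<alpha> + norm g) * infdist u L \<le> g \<bullet> u"
proof -
  obtain u' where "u' \<in> L" and u': "infdist u L = norm (u - u')"
    using infdist_attains_inf[OF \<open>closed L\<close> \<open>L \<noteq> {}\<close>] by (metis dist_norm)
  have "\<alpha> * norm u \<le> \<alpha> * norm u' + \<alpha> * norm (u - u')"
    using norm_triangle_sub[of u u'] \<open>\<alpha> \<ge> 0\<close> by (simp add: distrib_left[symmetric] mult_left_mono)
  moreover have "- (norm g * norm (u - u')) \<le> g \<bullet> (u - u')"
    using Cauchy_Schwarz_ineq2[of g "u - u'"] by linarith
  ultimately show ?thesis
    using growth[OF \<open>u' \<in> L\<close>] u' by (simp add: inner_diff_right algebra_simps)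
qed

lemma quadratic_lower_bound:
  fixes a b c d :: real
  assumes "c > 0" "b\<^sup>2 \<le> c * a"
  shows "a / 2 \<le> a - b * d + c / 2 * d\<^sup>2"
proof -
  have "0 \<le> (c * d - b)\<^sup>2 + (c * a - b\<^sup>2)"
    using assms by simp
  also have "\<dots> = 2 * c * (a - b * d + c / 2 * d\<^sup>2 - a / 2)"
    by (simp add: power2_eq_square algebra_simps)
  finally show ?thesis
    using assms(1) by (simp add: zero_le_mult_iff)
qed

lemma continuous_attains_inf_in_ball:
  fixes F :: "'a::heine_borel \<Rightarrow> real"
  assumes "continuous_on (cball x r) F" "r > 0" and sphere: "\<And>u. dist x u = r \<Longrightarrow> F x < F u"
  obtains u0 where "u0 \<in> ball x r" "\<And>u. u \<in> cball x r \<Longrightarrow> F u0 \<le> F u"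
proof -
  obtain u0 where "u0 \<in> cball x r" and min: "\<And>u. u \<in> cball x r \<Longrightarrow> F u0 \<le> F u"
    using continuous_attains_inf[OF compact_cball _ assms(1)] \<open>r > 0\<close> by fastforce
  have "dist x u0 \<noteq> r"
    using sphere[of u0] min[of x] \<open>r > 0\<close> by fastforce
  then have "u0 \<in> ball x r"
    using \<open>u0 \<in> cball x r\<close> by simp
  then show ?thesis
    using that min by blast
qed

lemma local_min_quadratic_penalty:
  fixes J :: "real^'d^'s" and g u0 :: "real^'d" and v :: "real^'s" and c :: real
  defines "G \<equiv> \<lambda>u. g \<bullet> u + c / 2 * norm (J *v u - v) ^ 2"
  assumes "\<forall>\<^sub>F u in at u0. G u0 \<le> G u"
  shows "g + transpose J *v (c *\<^sub>R (J *v u0 - v)) = 0"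
proof -
  have G: "G = (\<lambda>u. g \<bullet> u + c / 2 * ((J *v u - v) \<bullet> (J *v u - v)))"
    by (simp add: G_def power2_norm_eq_inner)
  have "(G has_derivative (\<lambda>h. g \<bullet> h + c / 2 * ((J *v h) \<bullet> (J *v u0 - v) + (J *v u0 - v) \<bullet> (J *v h)))) (at u0)"
    unfolding G by (auto intro!: derivative_eq_intros
        bounded_linear.has_derivative[OF matrix_vector_mul_bounded_linear])
  from has_derivative_local_min[OF this assms(2)[folded G]]
  have stationary: "g \<bullet> h + c * ((J *v u0 - v) \<bullet> (J *v h)) = 0" for h
    by (drule_tac fun_cong[of _ _ h]) (simp add: inner_commute)
  have "y \<bullet> (J *v h) = (transpose J *v y) \<bullet> h" for y h
    by (simp add: transpose_matrix_vector dot_lmul_matrix)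
  then have "(g + transpose J *v (c *\<^sub>R (J *v u0 - v))) \<bullet> h = 0" for h
    using stationary[of h] by (simp add: inner_add_left matrix_vector_mult_scaleR)
  then show ?thesis
    using inner_eq_zero_iff by blast
qed

lemma multiplier_of_penalty_local_min:
  fixes J :: "real^'d^'s" and g u0 :: "real^'d"
  assumes "closed T" "T \<noteq> {}" "c \<ge> 0"
    and local_min: "\<forall>\<^sub>F u in at u0. g \<bullet> u0 + c / 2 * infdist (J *v u0) T ^ 2
                                    \<le> g \<bullet> u + c / 2 * infdist (J *v u) T ^ 2"
  shows "\<exists>v y. v \<in> T \<and> y \<in> polar_cone (tangent_cone T v) \<and> g + transpose J *v y = 0"
proof -
  obtain v0 where "v0 \<in> T" and v0: "infdist (J *v u0) T = dist (J *v u0) v0"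
    using infdist_attains_inf[OF \<open>closed T\<close> \<open>T \<noteq> {}\<close>] by blast
  have penalty_le: "infdist (J *v u) T ^ 2 \<le> norm (J *v u - v0) ^ 2" for u
    using infdist_le[OF \<open>v0 \<in> T\<close>, of "J *v u"] by (simp add: dist_norm infdist_nonneg power_mono)
  (* Freezing the nearest point v0 gives a smooth majorant of the penalty touching it at u0. *)
  then have "\<forall>\<^sub>F u in at u0. g \<bullet> u0 + c / 2 * norm (J *v u0 - v0) ^ 2
                              \<le> g \<bullet> u + c / 2 * norm (J *v u - v0) ^ 2"
    using local_min
  proof (elim eventually_mono)
    fix u
    assume "g \<bullet> u0 + c / 2 * infdist (J *v u0) T ^ 2 \<le> g \<bullet> u + c / 2 * infdist (J *v u) T ^ 2"
    moreover have "c / 2 * infdist (J *v u) T ^ 2 \<le> c / 2 * norm (J *v u - v0) ^ 2"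
      using \<open>c \<ge> 0\<close> penalty_le[of u] by (simp add: mult_left_mono)
    ultimately show "g \<bullet> u0 + c / 2 * norm (J *v u0 - v0) ^ 2 \<le> g \<bullet> u + c / 2 * norm (J *v u - v0) ^ 2"
      using v0 by (simp add: dist_norm)
  qed
  then have "g + transpose J *v (c *\<^sub>R (J *v u0 - v0)) = 0"
    by (rule local_min_quadratic_penalty)
  moreover have "dist (J *v u0) v0 \<le> dist (J *v u0) v" if "v \<in> T" for v
    using v0 infdist_le[OF that, of "J *v u0"] by linarith
  then have "c *\<^sub>R (J *v u0 - v0) \<in> polar_cone (tangent_cone T v0)"
    using \<open>c \<ge> 0\<close> \<open>v0 \<in> T\<close> by (intro polar_cone_scaleR_nonneg nearest_point_in_polar_tangent_cone)
  ultimately show ?thesis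
    using \<open>v0 \<in> T\<close> by blast
qed

lemma penalty_positive_on_sphere:
  fixes J :: "real^'d^'s" and g :: "real^'d"
  assumes "closed T" "0 \<in> T" "\<alpha> > 0" "\<rho> > 0"
    and growth: "\<And>u. J *v u \<in> T \<Longrightarrow> \<alpha> * norm u \<le> g \<bullet> u"
    and subreg: "\<And>u. norm u \<le> \<rho> \<Longrightarrow> infdist u {u. J *v u \<in> T} \<le> \<kappa> * infdist (J *v u) T"
  obtains c where "c > 0" "\<And>u. norm u = \<rho> \<Longrightarrow> 0 < g \<bullet> u + c / 2 * infdist (J *v u) T ^ 2"
proof -
  define L where "L = {u. J *v u \<in> T}"
  define K where "K = \<alpha> + norm g"
  define d where "d u = infdist (J *v u) T" for u
  define c where "c = (K * \<kappa>)\<^sup>2 / (\<alpha> * \<rho>) + 1"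
  have "closed L"
    unfolding L_def using \<open>closed T\<close>
    by (intro continuous_closed_vimage[unfolded vimage_def]) (auto intro: continuous_intros)
  have "0 \<in> L"
    using \<open>0 \<in> T\<close> by (simp add: L_def)
  then have "L \<noteq> {}"
    by blast
  have "K \<ge> 0" "c > 0"
    using \<open>\<alpha> > 0\<close> \<open>\<rho> > 0\<close> by (simp_all add: K_def c_def add_nonneg_pos)
  have "(K * \<kappa>)\<^sup>2 \<le> c * (\<alpha> * \<rho>)"
    using \<open>\<alpha> > 0\<close> \<open>\<rho> > 0\<close> by (simp add: c_def distrib_right)
  have growth_near_L: "\<alpha> * norm u - K * infdist u L \<le> g \<bullet> u" for u
    unfolding K_def using \<open>\<alpha> > 0\<close> growth
    by (intro linear_growth_infdist[OF \<open>closed L\<close> \<open>L \<noteq> {}\<close>]) (auto simp: L_def)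
  have "0 < g \<bullet> u + c / 2 * d u ^ 2" if "norm u = \<rho>" for u
  proof -
    have "K * infdist u L \<le> K * \<kappa> * d u"
      using subreg[of u] that \<open>K \<ge> 0\<close> by (simp add: L_def d_def mult_left_mono mult.assoc)
    then have "\<alpha> * \<rho> - K * \<kappa> * d u \<le> g \<bullet> u"
      using growth_near_L[of u] unfolding that by linarith
    moreover have "\<alpha> * \<rho> / 2 \<le> \<alpha> * \<rho> - K * \<kappa> * d u + c / 2 * d u ^ 2"
      by (rule quadratic_lower_bound[OF \<open>c > 0\<close> \<open>(K * \<kappa>)\<^sup>2 \<le> c * (\<alpha> * \<rho>)\<close>])
    moreover have "0 < \<alpha> * \<rho>"
      using \<open>\<alpha> > 0\<close> \<open>\<rho> > 0\<close> by simp
    ultimately show ?thesis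
      by linarith
  qed
  then show ?thesis
    using that \<open>c > 0\<close> unfolding d_def by blast
qed

lemma multiplier_of_linearized_problem:
  fixes J :: "real^'d^'s" and g :: "real^'d"
  assumes "closed T" "0 \<in> T" "\<alpha> > 0" "\<rho> > 0"
    and growth: "\<And>u. J *v u \<in> T \<Longrightarrow> \<alpha> * norm u \<le> g \<bullet> u"
    and subreg: "\<And>u. norm u \<le> \<rho> \<Longrightarrow> infdist u {u. J *v u \<in> T} \<le> \<kappa> * infdist (J *v u) T"
  shows "\<exists>v y. v \<in> T \<and> y \<in> polar_cone (tangent_cone T v) \<and> g + transpose J *v y = 0"
proof -
  obtain c where "c > 0" and positive: "\<And>u. norm u = \<rho> \<Longrightarrow> 0 < g \<bullet> u + c / 2 * infdist (J *v u) T ^ 2"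
    using penalty_positive_on_sphere[OF assms] by blast
  define F where "F u = g \<bullet> u + c / 2 * infdist (J *v u) T ^ 2" for u
  have "F 0 < F u" if "dist 0 u = \<rho>" for u
    using positive[of u] that \<open>0 \<in> T\<close> by (simp add: F_def)
  moreover have "continuous_on (cball 0 \<rho>) F"
    unfolding F_def by (auto intro!: continuous_intros continuous_on_infdist)
  ultimately obtain u0 where "u0 \<in> ball 0 \<rho>" and min: "\<And>u. u \<in> cball 0 \<rho> \<Longrightarrow> F u0 \<le> F u"
    using continuous_attains_inf_in_ball \<open>\<rho> > 0\<close> by blast
  have "\<forall>\<^sub>F u in at u0. u \<in> ball 0 \<rho>"
    using \<open>u0 \<in> ball 0 \<rho>\<close> by (intro eventually_at_in_open') auto
  then have "\<forall>\<^sub>F u in at u0. F u0 \<le> F u"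
    by (elim eventually_mono) (simp add: min)
  then show ?thesis
    using \<open>closed T\<close> \<open>0 \<in> T\<close> \<open>c > 0\<close> unfolding F_def
    by (intro multiplier_of_penalty_local_min) auto
qed

theorem corollary4p5:
  fixes f :: "real^'d \<Rightarrow> real" and gradf :: "real^'d \<Rightarrow> real^'d"
    and P :: "real^'d \<Rightarrow> real^'s" and JP :: "real^'d \<Rightarrow> real^'d^'s"
    and D :: "(real^'s) set" and zb :: "real^'d"
  assumes f_deriv: "\<And>z. (f has_derivative (\<lambda>u. gradf z \<bullet> u)) (at z)"
    and f_C1: "continuous_on UNIV gradf"
    and P_deriv: "\<And>z. (P has_derivative (\<lambda>u. JP z *v u)) (at z)"
    and P_C1: "continuous_on UNIV JP"
    and D_closed: "closed D"
    and sharp: "sharp_minimum f {z. P z \<in> D} zb"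
    and ggcq: "GGCQ {z. P z \<in> D} (JP zb) D zb (P zb)"
    and subreg: "metrically_subregular
                   (\<lambda>u. {JP zb *v u - v | v. v \<in> tangent_cone D (P zb)}) 0 0"
  shows "\<exists>w ws. w \<in> tangent_cone D (P zb)
           \<and> ws \<in> regular_normal_cone (tangent_cone D (P zb)) w
           \<and> gradf zb + transpose (JP zb) *v ws = 0"
proof -
  let ?T = "tangent_cone D (P zb)"
  have "P zb \<in> D"
    using sharp unfolding sharp_minimum_def by simp
  then have "0 \<in> ?T"
    by (rule zero_in_tangent_cone)
  obtain \<alpha> where "\<alpha> > 0"
    and growth: "\<And>u. u \<in> tangent_cone {z. P z \<in> D} zb \<Longrightarrow> \<alpha> * norm u \<le> gradf zb \<bullet> u"
    using sharp_minimum_tangent_growth[OF f_deriv sharp] by blast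
  have "polar_cone (tangent_cone {z. P z \<in> D} zb) \<subseteq> polar_cone {u. JP zb *v u \<in> ?T}"
    using ggcq by (simp add: GGCQ_def regular_normal_cone_def lin_tangent_cone_def)
  from linear_growth_polar_cone_mono[OF this less_imp_le[OF \<open>\<alpha> > 0\<close>] growth]
  have linearized_growth: "\<alpha> * norm u \<le> gradf zb \<bullet> u" if "JP zb *v u \<in> ?T" for u
    using that by simp
  obtain \<rho> \<kappa> where "\<rho> > 0" and subregular_bound: "\<And>u. norm u \<le> \<rho> \<Longrightarrow>
      infdist u {u. JP zb *v u \<in> ?T} \<le> \<kappa> * infdist (JP zb *v u) ?T"
    using metrically_subregular_at_zero_infdist_bound[OF subreg] \<open>0 \<in> ?T\<close> by blast
  from multiplier_of_linearized_problem[OF closed_tangent_cone \<open>0 \<in> ?T\<close> \<open>\<alpha> > 0\<close> \<open>\<rho> > 0\<close>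
      linearized_growth subregular_bound]
  show ?thesis
    unfolding regular_normal_cone_def .
qed

end
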